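(* Let $N\ge2$ and let $a_1,\dots,a_m$ be transpositions in $S_N$ each of the form $(\alpha,N)$ with $1\le\alpha\le N-1$. Suppose that for some $k$ we have $a_k\ne a_i$ for all $i\ne k$. Let $\sigma_1=a_1\cdots a_{k-1}$ and $\sigma_2=a_{k+1}\cdots a_m$. Then $|\sigma_1a_k\sigma_2|=|\sigma_1\sigma_2|+1$.
   Context: For a permutation $\sigma$, its length $|\sigma|$ is the minimal number of transpositions whose product is $\sigma$ (equivalently, $N$ minus the number of cycles of $\sigma$, fixed points included). Empty products are the identity. *)

theory Defs
  imports "HOL-Combinatorics.Combinatorics"
begin

text \<open>Permutations of {1..N} are functions nat => nat (fixing everything outside {1..N}).
  The cycle of x under sigma is its orbit; fixed points give singleton cycles.\<close>

definition cyc_of :: "(nat \<Rightarrow> nat) \<Rightarrow> nat \<Rightarrow> nat set" where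
  "cyc_of \<sigma> x = {(\<sigma> ^^ n) x | n. True}"

definition num_cycles :: "nat \<Rightarrow> (nat \<Rightarrow> nat) \<Rightarrow> nat" where
  "num_cycles N \<sigma> = card (cyc_of \<sigma> ` {1..N})"

definition perm_len :: "nat \<Rightarrow> (nat \<Rightarrow> nat) \<Rightarrow> nat" where
  "perm_len N \<sigma> = N - num_cycles N \<sigma>"

definition perm_prod :: "(nat \<Rightarrow> nat) list \<Rightarrow> nat \<Rightarrow> nat" where
  "perm_prod as = foldr (\<circ>) as id"

end

theory Submission
  imports Defs
begin

(* Write s1 = a_1 ... a_(k-1), s2 = a_(k+1) ... a_m and a_k = (alpha N).
   No factor of s1 or s2 moves alpha, so rho = s1 s2 fixes alpha.  Conjugating,
   s1 (alpha N) s2 = (alpha c) rho with c = s1 N, and c <> alpha.  Composing a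
   permutation rho that fixes alpha with the transposition (alpha c) on the left
   merges the singleton cycle {alpha} with the cycle of c and leaves every other
   cycle unchanged; hence the number of cycles drops by exactly one and the length
   grows by exactly one. *)

lemma orbit_eq_if_mem:
  assumes "permutation f" and "y \<in> orbit f x"
  shows "orbit f y = orbit f x"
  using orbit_cyclic_eq3[OF cyclic_on_orbit'[OF assms(1)] assms(2)] .

lemma num_cycles_eq_card_orbits:
  assumes "permutation \<sigma>"
  shows "num_cycles N \<sigma> = card (orbit \<sigma> ` {1..N})"
proof -
  have "cyc_of \<sigma> = orbit \<sigma>"
    using orbit_altdef_permutation[OF assms] by (auto simp: cyc_of_def)
  then show ?thesis by (simp add: num_cycles_def)
qed

text \<open>If \<open>B \<subseteq> S\<close> is a union of orbits, the orbits meeting \<open>S\<close> split into those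
  inside \<open>B\<close> and those of points outside \<open>B\<close>, and these two families are disjoint.\<close>
lemma card_orbits_split:
  assumes "permutation f" and "finite S" and "B \<subseteq> S"
    and closed: "\<And>y. y \<in> B \<Longrightarrow> orbit f y \<subseteq> B"
  shows "card (orbit f ` S) = card (orbit f ` B) + card (orbit f ` (S - B))"
proof -
  have "orbit f ` B \<inter> orbit f ` (S - B) = {}"
  proof (rule ccontr)
    assume "orbit f ` B \<inter> orbit f ` (S - B) \<noteq> {}"
    then obtain y x where "y \<in> B" "x \<in> S - B" "orbit f y = orbit f x" by blast
    with closed permutation_self_in_orbit[OF assms(1), of x] show False by blast
  qed
  moreover have "orbit f ` S = orbit f ` B \<union> orbit f ` (S - B)" using assms(3) by blast
  moreover have "finite B" using assms(2,3) finite_subset by blast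
  ultimately show ?thesis using assms(2) by (simp add: card_Un_disjoint)
qed

lemma fixed_point_notin_orbit:
  assumes perm: "permutation \<rho>" and fixed: "\<rho> \<alpha> = \<alpha>" and "c \<noteq> \<alpha>"
  shows "\<alpha> \<notin> orbit \<rho> c"
proof
  assume "\<alpha> \<in> orbit \<rho> c"
  then have "orbit \<rho> \<alpha> = orbit \<rho> c" by (rule orbit_eq_if_mem[OF perm])
  then have "orbit \<rho> c = {\<alpha>}" using orbit_eq_singleton_iff[of \<rho> \<alpha>, THEN iffD2, OF fixed] by simp
  with permutation_self_in_orbit[OF perm, of c] \<open>c \<noteq> \<alpha>\<close> show False by blast
qed

lemma orbit_transpose_comp_fixed_point:
  assumes perm: "permutation \<rho>" and fixed: "\<rho> \<alpha> = \<alpha>" and "c \<noteq> \<alpha>"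
  shows "orbit (transpose \<alpha> c \<circ> \<rho>) \<alpha> = insert \<alpha> (orbit \<rho> c)"
proof -
  define g where "g = transpose \<alpha> c \<circ> \<rho>"
  let ?C = "orbit \<rho> c"
  have g_apply: "g y = transpose \<alpha> c (\<rho> y)" for y by (simp add: g_def)
  have c_in: "c \<in> ?C" by (rule permutation_self_in_orbit[OF perm])
  have \<alpha>_notin: "\<alpha> \<notin> ?C" by (rule fixed_point_notin_orbit[OF assms])
  have c_in_g: "c \<in> orbit g \<alpha>" using orbit.base[of g \<alpha>] by (simp add: g_apply fixed)
  have "orbit g \<alpha> \<subseteq> insert \<alpha> ?C"
  proof
    fix y assume "y \<in> orbit g \<alpha>"
    then show "y \<in> insert \<alpha> ?C"
    proof induct
      case base
      show ?case using c_in by (simp add: g_apply fixed)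
    next
      case (step y)
      show ?case
      proof (cases "y = \<alpha>")
        case True
        then show ?thesis using c_in by (simp add: g_apply fixed)
      next
        case False
        then have "y \<in> ?C" using step.hyps(2) by simp
        then have "\<rho> y \<in> ?C" by (rule orbit.step)
        then show ?thesis using c_in
          by (cases "\<rho> y = \<alpha>"; cases "\<rho> y = c") (simp_all add: g_apply)
      qed
    qed
  qed
  moreover have "(\<rho> ^^ n) c \<in> orbit g \<alpha>" for n
  proof (induct n)
    case 0
    show ?case using c_in_g by simp
  next
    case (Suc n)
    let ?z = "(\<rho> ^^ n) c"
    have "\<rho> ?z \<in> ?C" using funpow_in_orbit[OF c_in, of "Suc n"] by simp
    then have "\<rho> ?z \<noteq> \<alpha>" using \<alpha>_notin by blast
    show ?case
    proof (cases "\<rho> ?z = c")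
      case True
      then show ?thesis using c_in_g by simp
    next
      case False
      with \<open>\<rho> ?z \<noteq> \<alpha>\<close> have "g ?z = \<rho> ?z" by (simp add: g_apply)
      then show ?thesis using orbit.step[OF Suc] by simp
    qed
  qed
  then have "?C \<subseteq> orbit g \<alpha>" using orbit_altdef_permutation[OF perm, of c] by auto
  moreover have "\<alpha> \<in> orbit g \<alpha>"
    unfolding g_def by (intro permutation_self_in_orbit permutation_compose permutation_swap_id perm)
  ultimately show ?thesis unfolding g_def by blast
qed

lemma orbit_transpose_comp_other:
  assumes perm: "permutation \<rho>" and fixed: "\<rho> \<alpha> = \<alpha>"
    and x: "x \<notin> insert \<alpha> (orbit \<rho> c)"
  shows "orbit (transpose \<alpha> c \<circ> \<rho>) x = orbit \<rho> x"
proof (rule orbit_cong)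
  show "x \<in> orbit \<rho> x" by (rule permutation_self_in_orbit[OF perm])
  fix s assume "s \<in> orbit \<rho> x"
  then have same: "orbit \<rho> (\<rho> s) = orbit \<rho> x" by (rule orbit_eq_if_mem[OF perm orbit.step])
  have "\<rho> s \<noteq> \<alpha>"
  proof
    assume "\<rho> s = \<alpha>"
    then have "orbit \<rho> x = {\<alpha>}" using same orbit_eq_singleton_iff[of \<rho> \<alpha>, THEN iffD2, OF fixed] by simp
    then show False using x permutation_self_in_orbit[OF perm, of x] by auto
  qed
  moreover have "\<rho> s \<noteq> c"
    using same x permutation_self_in_orbit[OF perm, of x] by auto
  ultimately show "(transpose \<alpha> c \<circ> \<rho>) s = \<rho> s" by simp
qed

lemma card_orbits_transpose_comp_fixed_point:
  assumes \<rho>: "\<rho> permutes S" and "finite S" and "\<alpha> \<in> S" "c \<in> S"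
    and fixed: "\<rho> \<alpha> = \<alpha>" and "c \<noteq> \<alpha>"
  shows "card (orbit \<rho> ` S) = card (orbit (transpose \<alpha> c \<circ> \<rho>) ` S) + 1"
proof -
  let ?g = "transpose \<alpha> c \<circ> \<rho>" and ?C = "orbit \<rho> c"
  let ?B = "insert \<alpha> ?C"
  have perm: "permutation \<rho>" using \<rho> \<open>finite S\<close> permutation_permutes by blast
  have perm_g: "permutation ?g"
    using \<open>finite S\<close> permutation_permutes
    by (blast intro: permutes_compose[OF \<rho>] permutes_swap_id assms(3,4))
  have B_sub: "?B \<subseteq> S" using permutes_orbit_subset[OF \<rho> \<open>c \<in> S\<close>] assms(3) by blast
  have orbit_g: "orbit ?g y = ?B" if "y \<in> ?B" for y
    using orbit_eq_if_mem[OF perm_g] orbit_transpose_comp_fixed_point[OF perm fixed \<open>c \<noteq> \<alpha>\<close>] that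
    by metis
  have c_in: "c \<in> ?C" by (rule permutation_self_in_orbit[OF perm])
  have orbit_\<alpha>: "orbit \<rho> \<alpha> = {\<alpha>}" by (rule orbit_eq_singleton_iff[of \<rho> \<alpha>, THEN iffD2, OF fixed])
  have orbits_C: "orbit \<rho> ` ?C = {?C}" using orbit_eq_if_mem[OF perm] c_in by blast
  have "\<alpha> \<notin> ?C" by (rule fixed_point_notin_orbit[OF perm fixed \<open>c \<noteq> \<alpha>\<close>])
  then have "{\<alpha>} \<noteq> ?C" by blast
  then have card_\<rho>: "card (orbit \<rho> ` ?B) = 2" using orbit_\<alpha> orbits_C by simp
  have orbits_g: "orbit ?g ` ?B = {?B}" using orbit_g by blast
  have card_g: "card (orbit ?g ` ?B) = 1" unfolding orbits_g by simp
  have rest: "orbit ?g ` (S - ?B) = orbit \<rho> ` (S - ?B)"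
    using orbit_transpose_comp_other[OF perm fixed] by auto
  have closed_\<rho>: "orbit \<rho> y \<subseteq> ?B" if "y \<in> ?B" for y
    using that orbit_\<alpha> orbits_C by blast
  have closed_g: "orbit ?g y \<subseteq> ?B" if "y \<in> ?B" for y using orbit_g[OF that] by simp
  show ?thesis
    using card_orbits_split[OF perm \<open>finite S\<close> B_sub closed_\<rho>]
      card_orbits_split[OF perm_g \<open>finite S\<close> B_sub closed_g] card_\<rho> card_g rest
    by simp
qed

lemma perm_len_transpose_comp_fixed_point:
  assumes \<rho>: "\<rho> permutes {1..N}" and "\<alpha> \<in> {1..N}" "c \<in> {1..N}"
    and "\<rho> \<alpha> = \<alpha>" and "c \<noteq> \<alpha>"
  shows "perm_len N (transpose \<alpha> c \<circ> \<rho>) = perm_len N \<rho> + 1"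
proof -
  let ?g = "transpose \<alpha> c \<circ> \<rho>"
  have "?g permutes {1..N}" by (intro permutes_compose[OF \<rho>] permutes_swap_id assms(2,3))
  then have perms: "permutation \<rho>" "permutation ?g" using \<rho> permutation_permutes by blast+
  have "card (orbit \<rho> ` {1..N}) \<le> N" using card_image_le[of "{1..N}" "orbit \<rho>"] by simp
  moreover have "card (orbit \<rho> ` {1..N}) = card (orbit ?g ` {1..N}) + 1"
    by (rule card_orbits_transpose_comp_fixed_point[OF \<rho> _ assms(2-5)]) simp
  ultimately show ?thesis
    unfolding perm_len_def num_cycles_eq_card_orbits[OF perms(1)] num_cycles_eq_card_orbits[OF perms(2)]
    by linarith
qed

lemma perm_prod_permutes:
  assumes "\<forall>f\<in>set fs. f permutes S"
  shows "perm_prod fs permutes S"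
  using assms by (induct fs) (auto simp: perm_prod_def permutes_id intro: permutes_compose)

lemma perm_prod_fixes:
  assumes "\<forall>f\<in>set fs. f \<alpha> = \<alpha>"
  shows "perm_prod fs \<alpha> = \<alpha>"
  using assms by (induct fs) (auto simp: perm_prod_def)

lemma comp_transpose_conj:
  assumes "inj s"
  shows "s \<circ> transpose a b = transpose (s a) (s b) \<circ> s"
proof
  fix x
  have "s x = s y \<longleftrightarrow> x = y" for y using assms by (simp add: inj_eq)
  then show "(s \<circ> transpose a b) x = (transpose (s a) (s b) \<circ> s) x"
    by (simp add: transpose_def)
qed

lemma nth_unique_not_in_take_drop:
  assumes "k < length xs" and unique: "\<forall>i<length xs. i \<noteq> k \<longrightarrow> xs ! i \<noteq> xs ! k"
  shows "xs ! k \<notin> set (take k xs)" and "xs ! k \<notin> set (drop (Suc k) xs)"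
  using unique by (auto simp: in_set_conv_nth)

theorem lemma3:
  fixes N k :: nat and as :: "nat list"
  assumes "N \<ge> 2"
    and "\<forall>\<alpha>\<in>set as. 1 \<le> \<alpha> \<and> \<alpha> \<le> N - 1"
    and "k < length as"
    and "\<forall>i<length as. i \<noteq> k \<longrightarrow> transpose (as ! k) N \<noteq> transpose (as ! i) N"
  shows "perm_len N (perm_prod (map (\<lambda>\<alpha>. transpose \<alpha> N) (take k as))
                      \<circ> transpose (as ! k) N
                      \<circ> perm_prod (map (\<lambda>\<alpha>. transpose \<alpha> N) (drop (Suc k) as)))
       = perm_len N (perm_prod (map (\<lambda>\<alpha>. transpose \<alpha> N) (take k as))
                      \<circ> perm_prod (map (\<lambda>\<alpha>. transpose \<alpha> N) (drop (Suc k) as))) + 1"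
proof -
  define a where "a = as ! k"
  define s1 where "s1 = perm_prod (map (\<lambda>\<alpha>. transpose \<alpha> N) (take k as))"
  define s2 where "s2 = perm_prod (map (\<lambda>\<alpha>. transpose \<alpha> N) (drop (Suc k) as))"
  have range: "b \<in> {1..N} \<and> b \<noteq> N" if "b \<in> set as" for b using assms(1,2) that by force
  have a: "a \<in> {1..N}" "a \<noteq> N" using range assms(3) by (simp_all add: a_def)
  have a_excl: "a \<notin> set (take k as)" "a \<notin> set (drop (Suc k) as)"
    using nth_unique_not_in_take_drop[OF assms(3)] assms(4) unfolding a_def by metis+
  have factors: "transpose b N permutes {1..N} \<and> transpose b N a = a"
    if "b \<in> set (take k as) \<union> set (drop (Suc k) as)" for b
  proof -
    have "b \<in> set as" "b \<noteq> a" using that a_excl by (auto dest: in_set_takeD in_set_dropD)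
    then show ?thesis using range[of b] a by (auto intro!: permutes_swap_id)
  qed
  have s1: "s1 permutes {1..N}" "s1 a = a" and s2: "s2 permutes {1..N}" "s2 a = a"
    unfolding s1_def s2_def using factors by (auto intro!: perm_prod_permutes perm_prod_fixes)
  have "s1 \<circ> transpose a N \<circ> s2 = transpose a (s1 N) \<circ> (s1 \<circ> s2)"
    using comp_transpose_conj[OF permutes_inj[OF s1(1)]] s1(2) by (simp add: comp_assoc)
  moreover have "perm_len N (transpose a (s1 N) \<circ> (s1 \<circ> s2)) = perm_len N (s1 \<circ> s2) + 1"
  proof (rule perm_len_transpose_comp_fixed_point)
    show "s1 \<circ> s2 permutes {1..N}" by (rule permutes_compose[OF s2(1) s1(1)])
    show "s1 N \<in> {1..N}" using permutes_in_image[OF s1(1)] assms(1) by simp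
    show "s1 N \<noteq> a" using permutes_inj[OF s1(1)] s1(2) a(2) by (metis inj_eq)
  qed (use a s1 s2 in simp_all)
  ultimately show ?thesis unfolding a_def s1_def s2_def by simp
qed

end
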